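(* Every Abel sequentially compact subset of $\mathbb{R}$ is bounded.
   Context: A sequence $(p_n)_{n\ge0}$ is Abel convergent to $\ell$ if $\sum_{k=0}^{\infty}p_k x^k$ converges for every $0\le x<1$ and $\lim_{x\to 1^-}(1-x)\sum_{k=0}^{\infty}p_k x^k=\ell$. A subset $F\subseteq\mathbb{R}$ is Abel sequentially compact if every sequence of points of $F$ has a subsequence Abel convergent to a limit belonging to $F$. *)

theory Defs
  imports "HOL-Analysis.Analysis"
begin

definition abel_convergent :: "(nat \<Rightarrow> real) \<Rightarrow> real \<Rightarrow> bool" where
  "abel_convergent p l \<longleftrightarrow>
     (\<forall>x::real. 0 \<le> x \<and> x < 1 \<longrightarrow> summable (\<lambda>k. p k * x ^ k)) \<and>
     ((\<lambda>x. (1 - x) * (\<Sum>k. p k * x ^ k)) \<longlongrightarrow> l) (at_left 1)"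

definition abel_seq_compact :: "real set \<Rightarrow> bool" where
  "abel_seq_compact F \<longleftrightarrow>
     (\<forall>a::nat \<Rightarrow> real. (\<forall>n. a n \<in> F) \<longrightarrow>
        (\<exists>(r::nat \<Rightarrow> nat) l. strict_mono r \<and> l \<in> F \<and> abel_convergent (a \<circ> r) l))"

end

theory Submission
  imports Defs
begin

text \<open>An unbounded set contains points of size at least \<open>2^n\<close>, and every subsequence
  \<open>p\<close> of such points still has \<open>2^k \<le> \<bar>p k\<bar>\<close>. Then the terms \<open>p k * (1/2)^k\<close> do not
  tend to zero, so the power series of \<open>p\<close> diverges at \<open>x = 1/2\<close> and \<open>p\<close> cannot be
  Abel convergent.\<close>

lemma abel_convergent_imp_summable:
  assumes "abel_convergent p l" "0 \<le> x" "x < 1"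
  shows "summable (\<lambda>k. p k * x ^ k)"
  using assms unfolding abel_convergent_def by blast

lemma unbounded_imp_dominating_sequence:
  fixes F :: "real set" and b :: "nat \<Rightarrow> real"
  assumes "\<not> bounded F"
  obtains a where "\<And>n. a n \<in> F" "\<And>n. b n \<le> \<bar>a n\<bar>"
proof -
  have "\<exists>y\<in>F. b n \<le> \<bar>y\<bar>" for n
    using assms unfolding bounded_iff by (metis linorder_not_le less_imp_le real_norm_def)
  then show thesis
    using that by metis
qed

lemma geometric_growth_subseq_not_summable:
  fixes a :: "nat \<Rightarrow> real" and c :: real
  assumes "strict_mono r" "c > 1" "\<And>n. c ^ n \<le> \<bar>a n\<bar>"
  shows "\<not> summable (\<lambda>k. a (r k) * (1 / c) ^ k)"
proof
  assume "summable (\<lambda>k. a (r k) * (1 / c) ^ k)"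
  then have "(\<lambda>k. a (r k) * (1 / c) ^ k) \<longlonglongrightarrow> 0"
    by (rule summable_LIMSEQ_zero)
  then obtain k where k: "\<bar>a (r k) * (1 / c) ^ k\<bar> < 1"
    using LIMSEQ_D[of _ 0 1] by fastforce
  have "c ^ k \<le> c ^ r k"
    using assms(1,2) by (simp add: power_increasing strict_mono_imp_increasing)
  also have "\<dots> \<le> \<bar>a (r k)\<bar>"
    by (rule assms(3))
  finally have "c ^ k * (1 / c) ^ k \<le> \<bar>a (r k)\<bar> * (1 / c) ^ k"
    by (rule mult_right_mono) (use assms(2) in simp)
  moreover have "c ^ k * (1 / c) ^ k = 1"
    using assms(2) by (simp add: power_one_over)
  ultimately show False
    using k assms(2) by (simp add: abs_mult)
qed

theorem theorem16:
  fixes F :: "real set"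
  assumes "abel_seq_compact F"
  shows "bounded F"
proof (rule ccontr)
  assume "\<not> bounded F"
  then obtain a where a: "\<And>n. a n \<in> F" "\<And>n. (2::real) ^ n \<le> \<bar>a n\<bar>"
    using unbounded_imp_dominating_sequence[of F "\<lambda>n. 2 ^ n"] by blast
  then obtain r l where r: "strict_mono r" and "abel_convergent (a \<circ> r) l"
    using assms unfolding abel_seq_compact_def by blast
  then have "summable (\<lambda>k. a (r k) * (1 / 2) ^ k)"
    using abel_convergent_imp_summable[of "a \<circ> r" l "1 / 2"] by simp
  then show False
    using geometric_growth_subseq_not_summable[OF r _ a(2)] by simp
qed

end
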